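(* Let $K$ be a non-archimedean local field and let $G$ be a discrete subgroup of $\mathrm{PSL}_2(K)$ with no $2$-torsion. For each vertex $v$ and each edge $e$ of the Bruhat--Tits tree $T_K$, the stabilisers $G_v$ and $G_e$ each have a unique lift to $\mathrm{SL}_2(K)$; that is, for $H\in\{G_v,G_e\}$ there exists exactly one homomorphism $\phi\colon H\to\mathrm{SL}_2(K)$ with $\pi\circ\phi=\mathrm{id}_H$, where $\pi\colon\mathrm{SL}_2(K)\to\mathrm{PSL}_2(K)$ is the quotient map.
   Context: $T_K$ is the Bruhat--Tits tree on which $\mathrm{PSL}_2(K)$ acts; $G_v$, $G_e$ denote the stabilisers in $G$ of the vertex $v$ and the edge $e$. *)

theory Defs
  imports "HOL-Analysis.Determinants" "HOL-Algebra.Coset"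
begin

text \<open>A valuation is given as a function v on K; only its values on nonzero
elements are meaningful (v 0 is irrelevant and never used).\<close>

definition discrete_valuation :: "('k::field \<Rightarrow> int) \<Rightarrow> bool" where
  "discrete_valuation v \<longleftrightarrow>
     (\<forall>x y. x \<noteq> 0 \<longrightarrow> y \<noteq> 0 \<longrightarrow> v (x * y) = v x + v y) \<and>
     (\<forall>x y. x \<noteq> 0 \<longrightarrow> y \<noteq> 0 \<longrightarrow> x + y \<noteq> 0 \<longrightarrow> v (x + y) \<ge> min (v x) (v y)) \<and>
     (\<exists>p. p \<noteq> 0 \<and> v p = 1)"

definition vclose :: "('k::field \<Rightarrow> int) \<Rightarrow> int \<Rightarrow> 'k \<Rightarrow> 'k \<Rightarrow> bool" where
  "vclose v N x y \<longleftrightarrow> x = y \<or> v (x - y) \<ge> N"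

definition val_ring :: "('k::field \<Rightarrow> int) \<Rightarrow> 'k set" where
  "val_ring v = {x. x = 0 \<or> v x \<ge> 0}"

definition val_complete :: "('k::field \<Rightarrow> int) \<Rightarrow> bool" where
  "val_complete v \<longleftrightarrow>
     (\<forall>s :: nat \<Rightarrow> 'k.
        (\<forall>N. \<exists>M. \<forall>m\<ge>M. \<forall>n\<ge>M. vclose v N (s m) (s n)) \<longrightarrow>
        (\<exists>l. \<forall>N. \<exists>M. \<forall>n\<ge>M. vclose v N (s n) l))"

text \<open>The residue field O/m is finite: finitely many residues represent every
element of the valuation ring modulo the maximal ideal.\<close>
definition finite_residue_field :: "('k::field \<Rightarrow> int) \<Rightarrow> bool" where
  "finite_residue_field v \<longleftrightarrow>
     (\<exists>R. finite R \<and> R \<subseteq> val_ring v \<and> (\<forall>x\<in>val_ring v. \<exists>r\<in>R. vclose v 1 x r))"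

definition nonarch_local_field :: "('k::field \<Rightarrow> int) \<Rightarrow> bool" where
  "nonarch_local_field v \<longleftrightarrow>
     discrete_valuation v \<and> val_complete v \<and> finite_residue_field v"

definition SL2 :: "('k::field ^2^2) monoid" where
  "SL2 = \<lparr> carrier = {A. det A = 1}, mult = (\<lambda>A B. A ** B), one = mat 1 \<rparr>"

definition centre_SL2 :: "('k::field ^2^2) set" where
  "centre_SL2 = {mat 1, - mat 1}"

definition PSL2 :: "('k::field ^2^2) set monoid" where
  "PSL2 = SL2 Mod centre_SL2"

definition proj_PSL2 :: "'k::field ^2^2 \<Rightarrow> ('k ^2^2) set" where
  "proj_PSL2 A = centre_SL2 #>\<^bsub>SL2\<^esub> A"

text \<open>Discreteness of a subgroup G of PSL2(K): some neighbourhood of the identity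
in SL2(K) meets the preimage of G only in the kernel {I,-I}.\<close>
definition discrete_PSL2 :: "('k::field \<Rightarrow> int) \<Rightarrow> ('k ^2^2) set set \<Rightarrow> bool" where
  "discrete_PSL2 v G \<longleftrightarrow>
     (\<exists>N. \<forall>A\<in>\<Union>G. (\<forall>i j. vclose v N (A $ i $ j) (mat 1 $ i $ j)) \<longrightarrow> A \<in> centre_SL2)"

definition no_2_torsion :: "('k::field ^2^2) set set \<Rightarrow> bool" where
  "no_2_torsion G \<longleftrightarrow>
     (\<forall>g\<in>G. g \<otimes>\<^bsub>PSL2\<^esub> g = \<one>\<^bsub>PSL2\<^esub> \<longrightarrow> g = \<one>\<^bsub>PSL2\<^esub>)"

definition lattice :: "('k::field \<Rightarrow> int) \<Rightarrow> ('k ^2) set \<Rightarrow> bool" where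
  "lattice v L \<longleftrightarrow>
     (\<exists>x y. x $ 1 * y $ 2 - x $ 2 * y $ 1 \<noteq> 0 \<and>
        L = {a *s x + b *s y | a b. a \<in> val_ring v \<and> b \<in> val_ring v})"

definition BT_vertex :: "('k::field \<Rightarrow> int) \<Rightarrow> ('k ^2) set set \<Rightarrow> bool" where
  "BT_vertex v V \<longleftrightarrow>
     (\<exists>L. lattice v L \<and> V = {(\<lambda>x. c *s x) ` L | c. c \<noteq> 0})"

definition BT_adjacent :: "('k::field \<Rightarrow> int) \<Rightarrow> ('k ^2) set set \<Rightarrow> ('k ^2) set set \<Rightarrow> bool" where
  "BT_adjacent v V W \<longleftrightarrow>
     (\<exists>L\<in>V. \<exists>L'\<in>W. \<exists>p. p \<noteq> 0 \<and> v p = 1 \<and>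
        (\<lambda>x. p *s x) ` L \<subset> L' \<and> L' \<subset> L)"

definition BT_edge :: "('k::field \<Rightarrow> int) \<Rightarrow> ('k ^2) set set set \<Rightarrow> bool" where
  "BT_edge v e \<longleftrightarrow>
     (\<exists>V W. BT_vertex v V \<and> BT_vertex v W \<and> BT_adjacent v V W \<and> e = {V, W})"

definition act_vertex :: "'k::field ^2^2 \<Rightarrow> ('k ^2) set set \<Rightarrow> ('k ^2) set set" where
  "act_vertex A V = (\<lambda>L. (\<lambda>x. A *v x) ` L) ` V"

definition act_edge :: "'k::field ^2^2 \<Rightarrow> ('k ^2) set set set \<Rightarrow> ('k ^2) set set set" where
  "act_edge A e = act_vertex A ` e"

text \<open>Stabilisers in G (G a subgroup of PSL2, elements are cosets {A,-A}; the
action of such an element is that of any of its representatives).\<close>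
definition stab_vertex :: "('k::field ^2^2) set set \<Rightarrow> ('k ^2) set set \<Rightarrow> ('k ^2^2) set set" where
  "stab_vertex G V = {g\<in>G. \<forall>A\<in>g. act_vertex A V = V}"

definition stab_edge :: "('k::field ^2^2) set set \<Rightarrow> ('k ^2) set set set \<Rightarrow> ('k ^2^2) set set" where
  "stab_edge G e = {g\<in>G. \<forall>A\<in>g. act_edge A e = e}"

definition unique_lift :: "('k::field ^2^2) set set \<Rightarrow> bool" where
  "unique_lift H \<longleftrightarrow>
     (\<exists>\<phi>. \<phi> \<in> hom (PSL2\<lparr>carrier := H\<rparr>) SL2 \<and> (\<forall>h\<in>H. proj_PSL2 (\<phi> h) = h) \<and>
        (\<forall>\<psi>. \<psi> \<in> hom (PSL2\<lparr>carrier := H\<rparr>) SL2 \<and> (\<forall>h\<in>H. proj_PSL2 (\<psi> h) = h)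
              \<longrightarrow> (\<forall>h\<in>H. \<psi> h = \<phi> h)))"

end

theory Submission
  imports Defs "HOL-Algebra.Sylow" "HOL-Algebra.Multiplicative_Group" "HOL-Combinatorics.Permutations"
begin

(* The stabilisers are finite. If A in SL2(K) maps the class of the lattice L = P O^2 to that of
   L' = P' O^2, then P'^-1 A P maps O^2 onto a multiple of O^2 and has the fixed determinant
   det (P'^-1 P), which bounds its entries from below; so every transporter consists of matrices
   with entries of bounded valuation. Such a bounded set is covered by finitely many translates
   A' + p^N M2(O), N large, and by discreteness each translate contains representatives of at most
   one element of G, because A'^-1 A is then close to the identity.

   A finite subgroup H of PSL2(K) without 2-torsion has odd order by Sylow's theorem. Two lifts of
   H differ by a homomorphism H -> {I, -I}, which is trivial as the order is odd. In characteristic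
   2 every element of PSL2(K) is a singleton. Otherwise the preimage of H in SL2(K) has order 2|H|,
   and A |-> sign of left translation by A on this preimage is a character which is -1 at -I, since
   -I acts by |H| disjoint transpositions; its kernel meets every coset {A, -A} exactly once and so
   defines the lift. *)

lemma matrix_mult_2_nth:
  "((A::'a::semiring_1^2^2) ** B) $ i $ j = A$i$1 * B$1$j + A$i$2 * B$2$j"
  by (simp add: matrix_matrix_mult_def sum_2)

lemma matrix_vector_mult_2_nth:
  "((A::'a::semiring_1^2^2) *v x) $ i = A$i$1 * x$1 + A$i$2 * x$2"
  by (simp add: matrix_vector_mult_def sum_2)

lemma mat_2_eq_iff:
  "(A::'a^2^2) = B \<longleftrightarrow> A$1$1 = B$1$1 \<and> A$1$2 = B$1$2 \<and> A$2$1 = B$2$1 \<and> A$2$2 = B$2$2"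
  by (auto simp: vec_eq_iff forall_2)

lemma vec_2_eq_iff: "(x::'a^2) = y \<longleftrightarrow> x$1 = y$1 \<and> x$2 = y$2"
  by (auto simp: vec_eq_iff forall_2)

lemma mat_1_2_nth:
  "mat 1 $ 1 $ 1 = (1::'a::zero_neq_one)" "mat 1 $ (2::2) $ 2 = (1::'a)"
  "mat 1 $ 1 $ (2::2) = (0::'a)" "mat 1 $ (2::2) $ 1 = (0::'a)"
  by (simp_all add: mat_def)

lemma matrix_mult_2_uminus:
  fixes A B :: "'a::comm_ring_1^2^2"
  shows "A ** (- B) = - (A ** B)" "(- A) ** B = - (A ** B)"
  by (simp_all add: mat_2_eq_iff matrix_mult_2_nth algebra_simps)

lemma matrix_mult_2_diff:
  fixes A B C :: "'a::comm_ring_1^2^2"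
  shows "A ** (B - C) = A ** B - A ** C"
  by (simp add: mat_2_eq_iff matrix_mult_2_nth algebra_simps)

lemma det_2_uminus: "det (- (A::'a::comm_ring_1^2^2)) = det A"
  by (simp add: det_2)

lemma matrix_vector_mult_2_scalar: "(A::'a::comm_ring_1^2^2) *v (c *s x) = c *s (A *v x)"
  by (simp add: vec_2_eq_iff matrix_vector_mult_2_nth algebra_simps)

definition adj2 :: "'a::comm_ring_1^2^2 \<Rightarrow> 'a^2^2" where
  "adj2 A = (\<chi> i j. if i = 1 \<and> j = 1 then A$2$2 else if i = 1 then - A$1$2
                     else if j = 1 then - A$2$1 else A$1$1)"

lemma adj2_nth:
  "adj2 A $1$1 = A$2$2" "adj2 A $1$2 = - A$1$2" "adj2 A $2$1 = - A$2$1" "adj2 A $2$2 = A$1$1"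
  by (simp_all add: adj2_def)

lemma adj2_mult_det_1:
  assumes "det A = 1"
  shows "adj2 A ** A = mat 1" "A ** adj2 A = mat 1"
  using assms by (simp_all add: mat_2_eq_iff matrix_mult_2_nth adj2_nth mat_1_2_nth det_2 algebra_simps)

lemma det_adj2: "det (adj2 A) = det A"
  by (simp add: det_2 adj2_nth algebra_simps)

lemma adj2_uminus: "adj2 (- A) = - adj2 A"
  by (simp add: mat_2_eq_iff adj2_nth)

lemma uminus_mat_1_neq:
  assumes "(2::'a::field) \<noteq> 0"
  shows "- mat 1 \<noteq> (mat 1 :: 'a^2^2)"
  using assms by (simp add: mat_2_eq_iff mat_1_2_nth eq_neg_iff_add_eq_0)

lemma uminus_matrix_neq:
  assumes "(2::'a::field) \<noteq> 0" and "det (A::'a^2^2) = 1"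
  shows "- A \<noteq> A"
proof
  assume "- A = A"
  then have "- mat 1 = (mat 1 :: 'a^2^2)"
    using adj2_mult_det_1(1)[OF assms(2)] by (metis matrix_mult_2_uminus(1))
  with uminus_mat_1_neq[OF assms(1)] show False ..
qed

lemma uminus_matrix_char_2:
  assumes "(2::'a::field) = 0"
  shows "- (A::'a^2^2) = A"
proof -
  have "- x = x" for x :: 'a
    using assms by (metis add_eq_0_iff mult_2 mult_zero_left one_add_one)
  then show ?thesis by (simp add: mat_2_eq_iff)
qed

lemma SL2_simps [simp]:
  "carrier SL2 = {A. det A = 1}" "mult SL2 = (\<lambda>A B. A ** B)" "one SL2 = mat 1"
  by (simp_all add: SL2_def)

lemma group_SL2: "group (SL2::('k::field^2^2) monoid)"
proof (rule groupI)
  fix x :: "'k^2^2" assume "x \<in> carrier SL2"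
  then show "\<exists>y\<in>carrier SL2. y \<otimes>\<^bsub>SL2\<^esub> x = \<one>\<^bsub>SL2\<^esub>"
    by (intro bexI[of _ "adj2 x"]) (simp_all add: adj2_mult_det_1 det_adj2)
qed (simp_all add: det_mul matrix_mul_assoc)

lemma inv_SL2: "det (A::'k::field^2^2) = 1 \<Longrightarrow> inv\<^bsub>SL2\<^esub> A = adj2 A"
  by (rule group.inv_equality[OF group_SL2]) (simp_all add: adj2_mult_det_1 det_adj2)

lemma centre_SL2_subset: "centre_SL2 \<subseteq> (carrier SL2 :: ('k::field^2^2) set)"
  by (auto simp: centre_SL2_def det_2_uminus)

lemma normal_centre_SL2: "centre_SL2 \<lhd> (SL2::('k::field^2^2) monoid)"
proof -
  have inv_centre: "inv\<^bsub>SL2\<^esub> h = h" if "h \<in> centre_SL2" for h :: "'k^2^2"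
  proof (rule group.inv_equality[OF group_SL2])
    show "h \<otimes>\<^bsub>SL2\<^esub> h = \<one>\<^bsub>SL2\<^esub>"
      using that by (auto simp: centre_SL2_def matrix_mult_2_uminus)
  qed (use that centre_SL2_subset in auto)
  have "subgroup centre_SL2 (SL2::('k^2^2) monoid)"
  proof (rule group.subgroupI[OF group_SL2 centre_SL2_subset])
    fix a b :: "'k^2^2" assume "a \<in> centre_SL2" "b \<in> centre_SL2"
    then show "a \<otimes>\<^bsub>SL2\<^esub> b \<in> centre_SL2"
      by (auto simp: centre_SL2_def matrix_mult_2_uminus)
  qed (auto simp: centre_SL2_def inv_centre)
  moreover have "x ** h ** adj2 x \<in> centre_SL2"
    if "det x = 1" "h \<in> centre_SL2" for x h :: "'k^2^2"
    using that adj2_mult_det_1(2)[of x]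
    by (auto simp: centre_SL2_def matrix_mult_2_uminus)
  ultimately show ?thesis
    by (auto simp: group.normal_inv_iff[OF group_SL2] inv_SL2)
qed

lemma group_PSL2: "group (PSL2::('k::field^2^2) set monoid)"
  unfolding PSL2_def by (rule normal.factorgroup_is_group[OF normal_centre_SL2])

lemma proj_PSL2_eq: "proj_PSL2 (A::'k::field^2^2) = {A, - A}"
  by (auto simp: proj_PSL2_def r_coset_def centre_SL2_def matrix_mult_2_uminus)

lemma nat_pow_SL2_uminus:
  "(- A) [^]\<^bsub>SL2\<^esub> (n::nat) = (if even n then A [^]\<^bsub>SL2\<^esub> n else - (A [^]\<^bsub>SL2\<^esub> n))"
  by (induction n) (auto simp: matrix_mult_2_uminus)

lemma carrier_PSL2: "carrier PSL2 = proj_PSL2 ` (carrier SL2 :: ('k::field^2^2) set)"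
  unfolding PSL2_def carrier_FactGroup proj_PSL2_def by simp

lemma one_PSL2: "\<one>\<^bsub>PSL2\<^esub> = {mat 1, - mat 1 :: 'k::field^2^2}"
  by (simp add: PSL2_def centre_SL2_def)

lemma mult_PSL2: "g \<otimes>\<^bsub>PSL2\<^esub> h = {A ** B | A B. A \<in> g \<and> B \<in> h}"
  by (auto simp: PSL2_def set_mult_def)

lemma inv_PSL2:
  "det A = 1 \<Longrightarrow> inv\<^bsub>PSL2\<^esub> proj_PSL2 (A::'k::field^2^2) = proj_PSL2 (adj2 A)"
  unfolding PSL2_def proj_PSL2_def
  by (simp add: normal.inv_FactGroup[OF normal_centre_SL2] carrier_FactGroup
      normal.rcos_inv[OF normal_centre_SL2] inv_SL2)

lemma carrier_PSL2_memD:
  "g \<in> carrier PSL2 \<Longrightarrow> A \<in> g \<Longrightarrow> det A = 1 \<and> g = proj_PSL2 (A::'k::field^2^2)"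
  by (auto simp: carrier_PSL2 proj_PSL2_eq det_2_uminus)

lemma carrier_PSL2_nonempty: "g \<in> carrier PSL2 \<Longrightarrow> g \<noteq> {}"
  by (auto simp: carrier_PSL2 proj_PSL2_eq)

lemma carrier_PSL2_memE:
  assumes "g \<in> carrier PSL2"
  obtains A :: "'k::field^2^2" where "det A = 1" "g = {A, - A}"
  using assms by (auto simp: carrier_PSL2 proj_PSL2_eq)

section \<open>Signs of translations in a finite group\<close>

lemma sign_on_fixpoint_free_involution:
  assumes "finite S" "\<And>x. x \<in> S \<Longrightarrow> f x \<in> S" "\<And>x. x \<in> S \<Longrightarrow> f x \<noteq> x"
    and "\<And>x. x \<in> S \<Longrightarrow> f (f x) = x"
  shows "sign_on S f = (-1) ^ (card S div 2)"
  using assms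
proof (induction "card S" arbitrary: S rule: less_induct)
  case less
  show ?case
  proof (cases "S = {}")
    case True
    then show ?thesis by (simp add: sign_on_def restrict_id_def)
  next
    case False
    then obtain a where a: "a \<in> S" by auto
    define S' where "S' = S - {a, f a}"
    have S'_closed: "f x \<in> S'" if "x \<in> S'" for x
    proof -
      have x: "x \<in> S" "x \<noteq> a" "x \<noteq> f a"
        using that by (auto simp: S'_def)
      then have "f x \<noteq> a" "f x \<noteq> f a"
        using less.prems(4) a by metis+
      then show ?thesis
        using less.prems(2) x(1) by (simp add: S'_def)
    qed
    have S'_finite: "finite S'"
      using less.prems(1) by (simp add: S'_def)
    have card_S: "card S = Suc (Suc (card S'))"
      using less.prems a card_Suc_Diff1[of S a] card_Suc_Diff1[of "S - {a}" "f a"]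
      by (simp add: S'_def Diff_insert2[symmetric])
    have IH: "sign_on S' f = (-1) ^ (card S' div 2)"
      using less.prems S'_finite S'_closed card_S by (intro less.hyps) (auto simp: S'_def)
    have bij: "bij_betw f S' S'"
      using S'_closed less.prems by (intro bij_betwI[of f S' S' f]) (auto simp: S'_def)
    have "restrict_id f S x = Transposition.transpose a (f a) (restrict_id f S' x)" for x
    proof (cases "x \<in> S'")
      case True
      with S'_closed[OF True] show ?thesis
        by (auto simp: S'_def Transposition.transpose_def)
    next
      case False
      then show ?thesis
        using a less.prems(2,4) by (auto simp: S'_def Transposition.transpose_def)
    qed
    then have "restrict_id f S = Transposition.transpose a (f a) \<circ> restrict_id f S'"
      by (simp add: fun_eq_iff)
    then have "sign_on S f = - sign_on S' f"
      using less.prems(3)[OF a] bij S'_finite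
      by (simp add: sign_on_def sign_compose permutation_swap_id sign_swap_id
          permutes_imp_permutation permutes_restrict_id)
    then show ?thesis
      using IH card_S by simp
  qed
qed

definition translation_sign :: "('a, 'b) monoid_scheme \<Rightarrow> 'a \<Rightarrow> int" where
  "translation_sign G a = sign_on (carrier G) (\<lambda>x. a \<otimes>\<^bsub>G\<^esub> x)"

context group
begin

lemma bij_betw_translation:
  "a \<in> carrier G \<Longrightarrow> bij_betw (\<lambda>x. a \<otimes> x) (carrier G) (carrier G)"
  by (intro bij_betwI[where g = "\<lambda>x. inv a \<otimes> x"]) (auto simp: m_assoc[symmetric])

lemma translation_sign_cases: "translation_sign G a = 1 \<or> translation_sign G a = -1"
  by (simp add: translation_sign_def sign_on_def sign_def)

lemma translation_sign_mult:
  assumes "finite (carrier G)" "a \<in> carrier G" "b \<in> carrier G"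
  shows "translation_sign G (a \<otimes> b) = translation_sign G a * translation_sign G b"
proof -
  have "translation_sign G (a \<otimes> b) = sign_on (carrier G) ((\<lambda>x. a \<otimes> x) \<circ> (\<lambda>x. b \<otimes> x))"
    unfolding translation_sign_def using assms by (intro sign_on_cong) (simp_all add: m_assoc)
  also have "\<dots> = translation_sign G a * translation_sign G b"
    unfolding translation_sign_def using assms by (intro sign_on_compose bij_betw_translation)
  finally show ?thesis .
qed

lemma translation_sign_involution:
  assumes "finite (carrier G)" "z \<in> carrier G" "z \<noteq> \<one>" "z \<otimes> z = \<one>"
  shows "translation_sign G z = (-1) ^ (order G div 2)"
  unfolding translation_sign_def order_def
  using assms by (intro sign_on_fixpoint_free_involution) (auto simp: m_assoc[symmetric])

lemma odd_order_if_no_involution: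
  assumes "finite (carrier G)" and no_inv: "\<And>x. x \<in> carrier G \<Longrightarrow> x \<otimes> x = \<one> \<Longrightarrow> x = \<one>"
  shows "odd (order G)"
proof
  assume "even (order G)"
  then obtain m where "order G = 2 ^ 1 * m"
    by auto
  then obtain Q where Q: "subgroup Q G" "card Q = 2"
    using sylow_thm[OF two_is_prime_nat is_group] assms(1) by fastforce
  obtain y z where yz: "Q = {y, z}" "y \<noteq> z"
    using Q(2) by (auto simp: card_2_iff)
  have "\<one> \<in> Q"
    using subgroup.one_closed[OF Q(1)] .
  then obtain x where x: "Q = {\<one>, x}" "x \<noteq> \<one>"
    using yz by (cases "y = \<one>") (auto simp: insert_commute)
  have "x \<in> carrier G"
    using x(1) subgroup.subset[OF Q(1)] by blast
  have "x \<otimes> x \<in> Q"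
    using subgroup.m_closed[OF Q(1)] x(1) by blast
  moreover have "x \<otimes> x \<noteq> x"
    using \<open>x \<in> carrier G\<close> x(2) by simp
  ultimately have "x \<otimes> x = \<one>"
    using x(1) by blast
  with no_inv \<open>x \<in> carrier G\<close> x(2) show False by blast
qed

end

section \<open>Lifts of finite subgroups of PSL2\<close>

definition is_lift :: "('k::field^2^2) set set \<Rightarrow> (('k^2^2) set \<Rightarrow> 'k^2^2) \<Rightarrow> bool" where
  "is_lift H \<phi> \<longleftrightarrow> \<phi> \<in> hom (PSL2\<lparr>carrier := H\<rparr>) SL2 \<and> (\<forall>h\<in>H. proj_PSL2 (\<phi> h) = h)"

lemma unique_lift_iff:
  "unique_lift H \<longleftrightarrow> (\<exists>\<phi>. is_lift H \<phi> \<and> (\<forall>\<psi>. is_lift H \<psi> \<longrightarrow> (\<forall>h\<in>H. \<psi> h = \<phi> h)))"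
  by (simp add: unique_lift_def is_lift_def)

lemma is_lift_mem: "is_lift H \<phi> \<Longrightarrow> h \<in> H \<Longrightarrow> \<phi> h \<in> h"
  unfolding is_lift_def by (metis insertI1 proj_PSL2_eq)

lemma is_liftI:
  assumes "H \<subseteq> carrier PSL2" "\<And>h. h \<in> H \<Longrightarrow> \<phi> h \<in> h"
    and "\<And>h k. h \<in> H \<Longrightarrow> k \<in> H \<Longrightarrow> \<phi> (h \<otimes>\<^bsub>PSL2\<^esub> k) = \<phi> h ** \<phi> k"
  shows "is_lift H (\<phi> :: ('k::field^2^2) set \<Rightarrow> 'k^2^2)"
proof -
  have "det (\<phi> h) = 1 \<and> h = proj_PSL2 (\<phi> h)" if "h \<in> H" for h
    using that assms(1,2) carrier_PSL2_memD by blast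
  then show ?thesis
    using assms(3) by (auto simp: is_lift_def hom_def)
qed

lemma lifts_eq_if_odd_exponent:
  fixes n :: nat
  assumes H: "subgroup H PSL2" and "odd n" and exp: "\<And>h. h \<in> H \<Longrightarrow> h [^]\<^bsub>PSL2\<^esub> n = \<one>\<^bsub>PSL2\<^esub>"
    and \<phi>: "is_lift H \<phi>" and \<psi>: "is_lift H \<psi>" and h: "h \<in> H"
  shows "\<psi> h = (\<phi> h :: 'k::field^2^2)"
proof (rule ccontr)
  assume ne: "\<psi> h \<noteq> \<phi> h"
  then have neg: "\<psi> h = - \<phi> h"
    using is_lift_mem[OF \<psi> h] \<phi> h by (auto simp: is_lift_def proj_PSL2_eq)
  have two: "(2::'k) \<noteq> 0"
    using ne neg uminus_matrix_char_2 by metis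
  have pow_lift: "\<theta> h [^]\<^bsub>SL2\<^esub> n = mat 1" if "is_lift H \<theta>" for \<theta>
  proof -
    interpret group_hom "PSL2\<lparr>carrier := H\<rparr>" SL2 \<theta>
      using that group.subgroup_imp_group[OF group_PSL2 H] group_SL2
      by (simp add: group_hom_def group_hom_axioms_def is_lift_def)
    have "\<theta> h [^]\<^bsub>SL2\<^esub> n = \<theta> (h [^]\<^bsub>PSL2\<lparr>carrier := H\<rparr>\<^esub> n)"
      using h by (simp add: hom_nat_pow)
    also have "h [^]\<^bsub>PSL2\<lparr>carrier := H\<rparr>\<^esub> n = \<one>\<^bsub>PSL2\<lparr>carrier := H\<rparr>\<^esub>"
      using exp[OF h] by (simp add: nat_pow_def)
    finally show ?thesis
      using hom_one by simp
  qed
  have "- mat 1 = (mat 1 :: 'k^2^2)"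
    using pow_lift[OF \<phi>] pow_lift[OF \<psi>] neg \<open>odd n\<close> by (simp add: nat_pow_SL2_uminus)
  with uminus_mat_1_neq[OF two] show False ..
qed

lemma subgroup_Union_PSL2:
  assumes "subgroup H PSL2"
  shows "subgroup (\<Union>H) (SL2::('k::field^2^2) monoid)"
proof
  have H: "H \<subseteq> carrier PSL2"
    using subgroup.subset[OF assms] .
  show "\<Union>H \<subseteq> carrier SL2"
  proof
    fix A assume "A \<in> \<Union>H"
    then obtain g where "A \<in> g" "g \<in> H"
      by blast
    then show "A \<in> carrier SL2"
      using H carrier_PSL2_memD[of g A] by auto
  qed
  show "A \<otimes>\<^bsub>SL2\<^esub> B \<in> \<Union>H" if AB: "A \<in> \<Union>H" "B \<in> \<Union>H" for A B
  proof -
    obtain g h where gh: "A \<in> g" "B \<in> h" "g \<in> H" "h \<in> H"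
      using AB by blast
    then have "A ** B \<in> g \<otimes>\<^bsub>PSL2\<^esub> h"
      unfolding mult_PSL2 by blast
    then have "A ** B \<in> \<Union>H"
      using subgroup.m_closed[OF assms gh(3,4)] by blast
    then show ?thesis
      by simp
  qed
  show "\<one>\<^bsub>SL2\<^esub> \<in> \<Union>H"
    using subgroup.one_closed[OF assms] by (auto simp: one_PSL2)
  show "inv\<^bsub>SL2\<^esub> A \<in> \<Union>H" if A: "A \<in> \<Union>H" for A
  proof -
    obtain g where g: "A \<in> g" "g \<in> H"
      using A by blast
    then have A: "det A = 1" "g = proj_PSL2 A"
      using H carrier_PSL2_memD[of g A] by auto
    then have "adj2 A \<in> inv\<^bsub>PSL2\<^esub> g"
      using inv_PSL2[of A] by (simp add: proj_PSL2_eq)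
    moreover have "inv\<^bsub>PSL2\<^esub> g \<in> H"
      by (rule subgroup.m_inv_closed[OF assms g(2)])
    ultimately show ?thesis
      unfolding inv_SL2[OF A(1)] by blast
  qed
qed

lemma card_Union_PSL2:
  assumes "(2::'k::field) \<noteq> 0" "H \<subseteq> carrier PSL2" "finite H"
  shows "finite (\<Union>H)" "card (\<Union>H :: ('k^2^2) set) = 2 * card H"
proof -
  have card_2: "finite g \<and> card g = 2" if "g \<in> H" for g
    using that assms(1,2) uminus_matrix_neq by (fastforce elim: carrier_PSL2_memE)
  then show "finite (\<Union>H)"
    using assms(3) by blast
  have "pairwise disjnt H"
  proof (rule pairwiseI)
    fix g k assume "g \<in> H" "k \<in> H" "g \<noteq> k"
    then show "disjnt g k"
      using assms(2) carrier_PSL2_memD unfolding disjnt_def by blast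
  qed
  then have "card (\<Union>H) = (\<Sum>g\<in>H. card g)"
    using card_2 by (intro card_Union_disjoint) auto
  also have "\<dots> = 2 * card H"
    using card_2 by simp
  finally show "card (\<Union>H :: ('k^2^2) set) = 2 * card H" .
qed

lemma lift_exists_char_2:
  assumes "(2::'k::field) = 0" "subgroup H PSL2"
  shows "\<exists>\<phi>. is_lift H (\<phi> :: ('k^2^2) set \<Rightarrow> 'k^2^2)"
proof -
  have H: "H \<subseteq> carrier PSL2"
    using subgroup.subset[OF assms(2)] .
  have singleton: "\<exists>A. h = {A}" if h: "h \<in> H" for h
  proof -
    obtain A where "h = {A, - A}"
      using h H by (blast elim: carrier_PSL2_memE)
    then show ?thesis
      using uminus_matrix_char_2[OF assms(1), of A] by auto
  qed
  have "is_lift H the_elem"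
  proof (rule is_liftI[OF H])
    show "the_elem h \<in> h" if "h \<in> H" for h
      using singleton[OF that] by auto
    show "the_elem (h \<otimes>\<^bsub>PSL2\<^esub> k) = the_elem h ** the_elem k" if hk: "h \<in> H" "k \<in> H" for h k
    proof -
      obtain A B where "h = {A}" "k = {B}"
        using singleton hk by blast
      then show ?thesis
        by (auto simp: mult_PSL2)
    qed
  qed
  then show ?thesis
    by blast
qed

lemma lift_exists_odd_order:
  assumes two: "(2::'k::field) \<noteq> 0" and sub: "subgroup H PSL2" and fin: "finite H"
    and odd: "odd (card H)"
  shows "\<exists>\<phi>. is_lift H (\<phi> :: ('k^2^2) set \<Rightarrow> 'k^2^2)"
proof -
  have H: "H \<subseteq> carrier PSL2"
    using subgroup.subset[OF sub] .
  let ?\<Gamma> = "SL2\<lparr>carrier := \<Union>H\<rparr> :: ('k^2^2) monoid"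
  interpret \<Gamma>: group ?\<Gamma>
    by (rule group.subgroup_imp_group[OF group_SL2 subgroup_Union_PSL2[OF sub]])
  define s where "s = translation_sign ?\<Gamma>"
  have fin_\<Gamma>: "finite (carrier ?\<Gamma>)"
    using card_Union_PSL2[OF two H fin] by simp
  have s_mult: "s (A ** B) = s A * s B" if "A \<in> \<Union>H" "B \<in> \<Union>H" for A B
    using \<Gamma>.translation_sign_mult[OF fin_\<Gamma>] that by (simp add: s_def)
  have neg_one: "- mat 1 \<in> \<Union>H"
    using subgroup.one_closed[OF sub] by (auto simp: one_PSL2)
  have "s (- mat 1) = (-1) ^ (2 * card H div 2)"
    using \<Gamma>.translation_sign_involution[OF fin_\<Gamma>, of "- mat 1"] neg_one
      uminus_mat_1_neq[OF two] card_Union_PSL2[OF two H fin]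
    by (simp add: s_def order_def matrix_mult_2_uminus)
  then have s_uminus: "s (- A) = - s A" if "A \<in> \<Union>H" for A
    using s_mult[OF neg_one that] odd by (simp add: matrix_mult_2_uminus)
  define \<phi> where "\<phi> h = (SOME A. A \<in> h \<and> s A = 1)" for h
  have \<phi>_spec: "\<phi> h \<in> h \<and> s (\<phi> h) = 1" if h: "h \<in> H" for h
  proof -
    obtain A where A: "det A = 1" "h = {A, - A}"
      using h H by (blast elim: carrier_PSL2_memE)
    then have "A \<in> \<Union>H"
      using h by blast
    then have "\<exists>B. B \<in> h \<and> s B = 1"
      using A(2) s_uminus[of A] \<Gamma>.translation_sign_cases[of A] by (auto simp: s_def)
    then show ?thesis
      unfolding \<phi>_def by (rule someI_ex)
  qed
  have \<phi>_unique: "\<phi> h = A" if h: "h \<in> H" "A \<in> h" "s A = 1" for h A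
  proof -
    have "det A = 1" "h = proj_PSL2 A"
      using h H carrier_PSL2_memD[of h A] by auto
    then have "h = {A, - A}" "A \<in> \<Union>H"
      using h by (auto simp: proj_PSL2_eq)
    then show ?thesis
      using \<phi>_spec[OF h(1)] s_uminus[of A] h(3) by auto
  qed
  have "is_lift H \<phi>"
  proof (rule is_liftI[OF H])
    show "\<phi> h \<in> h" if "h \<in> H" for h
      using \<phi>_spec[OF that] ..
    fix h k assume hk: "h \<in> H" "k \<in> H"
    then have "\<phi> h ** \<phi> k \<in> h \<otimes>\<^bsub>PSL2\<^esub> k"
      using \<phi>_spec unfolding mult_PSL2 by blast
    moreover have "s (\<phi> h ** \<phi> k) = 1"
      using hk \<phi>_spec s_mult[of "\<phi> h" "\<phi> k"] by auto
    ultimately show "\<phi> (h \<otimes>\<^bsub>PSL2\<^esub> k) = \<phi> h ** \<phi> k"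
      using \<phi>_unique[OF subgroup.m_closed[OF sub hk]] by blast
  qed
  then show ?thesis
    by blast
qed

lemma unique_lift_finite_subgroup:
  assumes sub: "subgroup H PSL2" and fin: "finite H"
    and no_inv: "\<And>g. g \<in> H \<Longrightarrow> g \<otimes>\<^bsub>PSL2\<^esub> g = \<one>\<^bsub>PSL2\<^esub> \<Longrightarrow> g = \<one>\<^bsub>PSL2\<^esub>"
  shows "unique_lift (H :: ('k::field^2^2) set set)"
proof -
  interpret H: group "PSL2\<lparr>carrier := H\<rparr>"
    by (rule group.subgroup_imp_group[OF group_PSL2 sub])
  have odd: "odd (card H)"
    using H.odd_order_if_no_involution fin no_inv by (simp add: order_def)
  have exp: "h [^]\<^bsub>PSL2\<^esub> card H = \<one>\<^bsub>PSL2\<^esub>" if "h \<in> H" for h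
    using H.pow_order_eq_1[of h] that by (simp add: order_def nat_pow_def)
  obtain \<phi> where "is_lift H \<phi>"
    using lift_exists_char_2[OF _ sub] lift_exists_odd_order[OF _ sub fin odd] by blast
  then show ?thesis
    unfolding unique_lift_iff using lifts_eq_if_odd_exponent[OF sub odd exp] by blast
qed

definition val_ge :: "('k::field \<Rightarrow> int) \<Rightarrow> int \<Rightarrow> 'k \<Rightarrow> bool" where
  "val_ge v a x \<longleftrightarrow> x = 0 \<or> a \<le> v x"

lemma val_ge_mono: "val_ge v a x \<Longrightarrow> b \<le> a \<Longrightarrow> val_ge v b x"
  by (auto simp: val_ge_def)

lemma val_ring_iff_val_ge: "x \<in> val_ring v \<longleftrightarrow> val_ge v 0 x"
  by (auto simp: val_ring_def val_ge_def)

lemma vclose_iff_val_ge: "vclose v N x y \<longleftrightarrow> val_ge v N (x - y)"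
  by (auto simp: vclose_def val_ge_def)

context
  fixes v :: "'k::field \<Rightarrow> int"
  assumes dv: "discrete_valuation v"
begin

lemma val_mult: "x \<noteq> 0 \<Longrightarrow> y \<noteq> 0 \<Longrightarrow> v (x * y) = v x + v y"
  using dv by (simp add: discrete_valuation_def)

lemma val_one: "v 1 = 0"
  using val_mult[of 1 1] by simp

lemma val_uminus: "v (- x) = v x"
proof (cases "x = 0")
  case False
  have "v (-1) + v (-1) = v 1"
    using val_mult[of "-1" "-1"] by simp
  then have "v (-1) = 0"
    using val_one by simp
  then show ?thesis
    using val_mult[of "-1" x] False by simp
qed simp

lemma val_power: "p \<noteq> 0 \<Longrightarrow> v (p ^ n) = int n * v p"
  by (induction n) (simp_all add: val_one val_mult algebra_simps)

lemma val_ge_add: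
  assumes "val_ge v a x" "val_ge v a y"
  shows "val_ge v a (x + y)"
proof (cases "x = 0 \<or> y = 0 \<or> x + y = 0")
  case False
  then have "min (v x) (v y) \<le> v (x + y)"
    using dv by (simp add: discrete_valuation_def)
  then show ?thesis
    using assms False by (simp add: val_ge_def)
qed (use assms in \<open>auto simp: val_ge_def\<close>)

lemma val_ge_uminus: "val_ge v a x \<Longrightarrow> val_ge v a (- x)"
  by (simp add: val_ge_def val_uminus)

lemma val_ge_diff: "val_ge v a x \<Longrightarrow> val_ge v a y \<Longrightarrow> val_ge v a (x - y)"
  using val_ge_add[of a x "- y"] val_ge_uminus[of a y] by simp

lemma val_ge_mult: "val_ge v a x \<Longrightarrow> val_ge v b y \<Longrightarrow> val_ge v (a + b) (x * y)"
  by (cases "x = 0"; cases "y = 0") (auto simp: val_ge_def val_mult)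

lemma val_ge_mult_cancel: "x \<noteq> 0 \<Longrightarrow> val_ge v (a + v x) (x * y) \<longleftrightarrow> val_ge v a y"
  by (cases "y = 0") (auto simp: val_ge_def val_mult)

lemma finite_residues_mod_power:
  assumes "finite_residue_field v"
  shows "\<exists>R. finite R \<and> (\<forall>r\<in>R. val_ge v 0 r) \<and>
           (\<forall>x. val_ge v 0 x \<longrightarrow> (\<exists>r\<in>R. val_ge v (int N) (x - r)))"
proof (induction N)
  case 0
  show ?case
    by (intro exI[of _ "{0}"]) (auto simp: val_ge_def)
next
  case (Suc N)
  obtain R where R: "finite R" "\<forall>r\<in>R. val_ge v 0 r"
    "\<forall>x. val_ge v 0 x \<longrightarrow> (\<exists>r\<in>R. val_ge v (int N) (x - r))"
    using Suc by blast
  obtain R1 where R1: "finite R1" "\<forall>r\<in>R1. val_ge v 0 r" "\<forall>x. val_ge v 0 x \<longrightarrow> (\<exists>r\<in>R1. val_ge v 1 (x - r))"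
    using assms by (auto simp: finite_residue_field_def val_ring_iff_val_ge vclose_iff_val_ge subset_iff)
  obtain p where p: "p \<noteq> 0" "v p = 1"
    using dv by (auto simp: discrete_valuation_def)
  have pN: "p ^ N \<noteq> 0" "v (p ^ N) = int N"
    using p by (simp_all add: val_power)
  define R' where "R' = (\<lambda>(r, s). r + p ^ N * s) ` (R \<times> R1)"
  show ?case
  proof (intro exI[of _ R'] conjI ballI allI impI)
    show "finite R'"
      unfolding R'_def using R(1) R1(1) by simp
  next
    fix r' assume "r' \<in> R'"
    then obtain r s where "r \<in> R" "s \<in> R1" "r' = r + p ^ N * s"
      unfolding R'_def by auto
    moreover have "val_ge v (int N + 0) (p ^ N * s)"
      using val_ge_mult[of "int N" "p ^ N" 0 s] \<open>s \<in> R1\<close> R1(2) pN by (simp add: val_ge_def)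
    ultimately show "val_ge v 0 r'"
      using R(2) val_ge_add val_ge_mono by fastforce
  next
    fix x assume x: "val_ge v 0 x"
    then obtain r where r: "r \<in> R" "val_ge v (int N) (x - r)"
      using R(3) by blast
    define y where "y = (x - r) / p ^ N"
    have xy: "x - r = p ^ N * y"
      using pN by (simp add: y_def)
    then have "val_ge v 0 y"
      using r(2) val_ge_mult_cancel[OF pN(1), of 0 y] pN(2) by simp
    then obtain s where s: "s \<in> R1" "val_ge v 1 (y - s)"
      using R1(3) by blast
    have "x - (r + p ^ N * s) = p ^ N * (y - s)"
      using xy by (simp add: algebra_simps)
    moreover have "val_ge v (int N + 1) (p ^ N * (y - s))"
      using val_ge_mult[of "int N" "p ^ N" 1 "y - s"] s(2) pN by (simp add: val_ge_def)
    moreover have "r + p ^ N * s \<in> R'"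
      unfolding R'_def using r(1) s(1) by force
    ultimately show "\<exists>r\<in>R'. val_ge v (int (Suc N)) (x - r)"
      by (metis of_nat_Suc add.commute)
  qed
qed

lemma finite_net_val_ge:
  assumes "finite_residue_field v"
  shows "\<exists>R. finite R \<and> (\<forall>x. val_ge v a x \<longrightarrow> (\<exists>r\<in>R. val_ge v b (x - r)))"
proof -
  obtain p where p: "p \<noteq> 0" "v p = 1"
    using dv by (auto simp: discrete_valuation_def)
  define K where "K = nat (- a)"
  have pK: "p ^ K \<noteq> 0" "v (p ^ K) = int K"
    using p by (simp_all add: val_power)
  obtain R where R: "finite R" "\<forall>x. val_ge v 0 x \<longrightarrow> (\<exists>r\<in>R. val_ge v (int (nat (b + K))) (x - r))"
    using finite_residues_mod_power[OF assms] by blast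
  have "\<exists>r\<in>(\<lambda>r. r / p ^ K) ` R. val_ge v b (x - r)" if x: "val_ge v a x" for x
  proof -
    have "val_ge v (int K + a) (p ^ K * x)"
      using val_ge_mult[of "int K" "p ^ K" a x] x pK by (simp add: val_ge_def)
    then have "val_ge v 0 (p ^ K * x)"
      by (rule val_ge_mono) (simp add: K_def)
    then obtain r where r: "r \<in> R" "val_ge v (int (nat (b + K))) (p ^ K * x - r)"
      using R(2) pK by auto
    have "p ^ K * x - r = p ^ K * (x - r / p ^ K)"
      using pK by (simp add: algebra_simps)
    then have "val_ge v (b + v (p ^ K)) (p ^ K * (x - r / p ^ K))"
      using r(2) pK val_ge_mono by fastforce
    then have "val_ge v b (x - r / p ^ K)"
      using val_ge_mult_cancel[OF pK(1)] by blast
    then show ?thesis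
      using r(1) by blast
  qed
  then show ?thesis
    using R(1) by blast
qed

end

section \<open>Bounded subsets of discrete subgroups\<close>

definition mat_val_ge :: "('k::field \<Rightarrow> int) \<Rightarrow> int \<Rightarrow> 'k^2^2 \<Rightarrow> bool" where
  "mat_val_ge v a X \<longleftrightarrow> (\<forall>i j. val_ge v a (X$i$j))"

lemma mat_val_ge_iff:
  "mat_val_ge v a X \<longleftrightarrow>
     val_ge v a (X$1$1) \<and> val_ge v a (X$1$2) \<and> val_ge v a (X$2$1) \<and> val_ge v a (X$2$2)"
  unfolding mat_val_ge_def by (auto simp: forall_2)

lemma mat_val_ge_exists: "\<exists>a. mat_val_ge v a X"
proof -
  have "mat_val_ge v (- (\<bar>v (X$1$1)\<bar> + \<bar>v (X$1$2)\<bar> + \<bar>v (X$2$1)\<bar> + \<bar>v (X$2$2)\<bar>)) X"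
    unfolding mat_val_ge_iff val_ge_def by auto
  then show ?thesis ..
qed

context
  fixes v :: "'k::field \<Rightarrow> int"
  assumes dv: "discrete_valuation v"
begin

lemma mat_val_ge_mult: "mat_val_ge v a X \<Longrightarrow> mat_val_ge v b Y \<Longrightarrow> mat_val_ge v (a + b) (X ** Y)"
  unfolding mat_val_ge_def matrix_mult_2_nth by (intro allI val_ge_add[OF dv] val_ge_mult[OF dv]) auto

lemma mat_val_ge_adj2: "mat_val_ge v a X \<Longrightarrow> mat_val_ge v a (adj2 X)"
  unfolding mat_val_ge_iff adj2_nth using val_ge_uminus[OF dv] by simp

lemma PSL2_eq_if_close:
  assumes sub: "subgroup G PSL2"
    and N0: "\<forall>X\<in>\<Union>G. (\<forall>i j. vclose v N0 (X$i$j) (mat 1 $ i $ j)) \<longrightarrow> X \<in> centre_SL2"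
    and g: "g \<in> G" "A \<in> g" and g': "g' \<in> G" "A' \<in> g'"
    and A': "mat_val_ge v b A'" and close: "mat_val_ge v (N0 - b) (A - A')"
  shows "g = g'"
proof -
  have G: "G \<subseteq> carrier PSL2"
    using subgroup.subset[OF sub] .
  have "det A = 1" "g = proj_PSL2 A" "det A' = 1" "g' = proj_PSL2 A'"
    using G g g' carrier_PSL2_memD by blast+
  define X where "X = adj2 A' ** A"
  have "X - mat 1 = adj2 A' ** (A - A')"
    using adj2_mult_det_1(1)[OF \<open>det A' = 1\<close>] by (simp add: X_def matrix_mult_2_diff)
  moreover have "mat_val_ge v (b + (N0 - b)) (adj2 A' ** (A - A'))"
    using mat_val_ge_mult mat_val_ge_adj2 A' close by blast
  ultimately have "mat_val_ge v N0 (X - mat 1)"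
    by simp
  then have "\<forall>i j. vclose v N0 (X$i$j) (mat 1 $ i $ j)"
    by (simp add: mat_val_ge_def vclose_iff_val_ge)
  moreover have "X \<in> inv\<^bsub>PSL2\<^esub> g' \<otimes>\<^bsub>PSL2\<^esub> g"
    using g(2) inv_PSL2[OF \<open>det A' = 1\<close>] \<open>g' = proj_PSL2 A'\<close>
    unfolding X_def mult_PSL2 proj_PSL2_eq by blast
  moreover have "inv\<^bsub>PSL2\<^esub> g' \<otimes>\<^bsub>PSL2\<^esub> g \<in> G"
    using sub g g' by (simp add: subgroup.m_closed subgroup.m_inv_closed)
  ultimately have "X \<in> centre_SL2"
    using N0 by blast
  moreover have "A = A' ** X"
    using adj2_mult_det_1(2)[OF \<open>det A' = 1\<close>] by (simp add: X_def matrix_mul_assoc)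
  ultimately have "A = A' \<or> A = - A'"
    by (auto simp: centre_SL2_def matrix_mult_2_uminus)
  then show ?thesis
    using \<open>g = proj_PSL2 A\<close> \<open>g' = proj_PSL2 A'\<close> by (auto simp: proj_PSL2_eq)
qed

lemma finite_bounded_subset_discrete:
  assumes fr: "finite_residue_field v" and sub: "subgroup G PSL2" and disc: "discrete_PSL2 v G"
  shows "finite {g\<in>G. \<exists>A\<in>g. mat_val_ge v b A}"
proof -
  obtain N0 where N0: "\<forall>X\<in>\<Union>G. (\<forall>i j. vclose v N0 (X$i$j) (mat 1 $ i $ j)) \<longrightarrow> X \<in> centre_SL2"
    using disc by (auto simp: discrete_PSL2_def)
  obtain R where R: "finite R" "\<forall>x. val_ge v b x \<longrightarrow> (\<exists>r\<in>R. val_ge v (N0 - b) (x - r))"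
    using finite_net_val_ge[OF dv fr] by blast
  define S where "S = {g\<in>G. \<exists>A\<in>g. mat_val_ge v b A}"
  define rep where "rep g = (SOME A. A \<in> g \<and> mat_val_ge v b A)" for g :: "('k^2^2) set"
  define near where "near x = (SOME r. r \<in> R \<and> val_ge v (N0 - b) (x - r))" for x
  define F where "F g = (\<lambda>(i, j). near (rep g $ i $ j))" for g
  have rep: "rep g \<in> g" "mat_val_ge v b (rep g)" if "g \<in> S" for g
    using someI_ex[of "\<lambda>A. A \<in> g \<and> mat_val_ge v b A"] that by (auto simp: S_def rep_def)
  have near: "near x \<in> R" "val_ge v (N0 - b) (x - near x)" if "val_ge v b x" for x
    using someI_ex[of "\<lambda>r. r \<in> R \<and> val_ge v (N0 - b) (x - r)"] that R(2) by (auto simp: near_def)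
  have "inj_on F S"
  proof (rule inj_onI)
    fix g g' assume g: "g \<in> S" and g': "g' \<in> S" and "F g = F g'"
    then have eq: "near (rep g $ i $ j) = near (rep g' $ i $ j)" for i j
      by (auto simp: F_def fun_eq_iff)
    have "val_ge v (N0 - b) (rep g $ i $ j - rep g' $ i $ j)" for i j
    proof -
      have "val_ge v (N0 - b)
          ((rep g $ i $ j - near (rep g $ i $ j)) - (rep g' $ i $ j - near (rep g' $ i $ j)))"
        using near rep(2) g g' val_ge_diff[OF dv] by (metis mat_val_ge_def)
      then show ?thesis
        using eq[of i j] by simp
    qed
    then have "mat_val_ge v (N0 - b) (rep g - rep g')"
      by (simp add: mat_val_ge_def)
    then show "g = g'"
      using PSL2_eq_if_close[OF sub N0, of g "rep g" g' "rep g'" b] rep[OF g] rep[OF g'] g g'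
      by (simp add: S_def)
  qed
  moreover have "F ` S \<subseteq> {f. \<forall>ij. f ij \<in> R}"
    using near rep(2) by (auto simp: F_def mat_val_ge_def)
  moreover have "finite {f :: 2 \<times> 2 \<Rightarrow> 'k. \<forall>ij. f ij \<in> R}"
    using finite_set_of_finite_funs[of "UNIV :: (2 \<times> 2) set" R] R(1) by simp
  ultimately show ?thesis
    unfolding S_def[symmetric] by (meson finite_imageD finite_subset)
qed

end

section \<open>Transporters between vertices of the Bruhat--Tits tree\<close>

definition std_lattice :: "('k::field \<Rightarrow> int) \<Rightarrow> ('k^2) set" where
  "std_lattice v = {w. val_ge v 0 (w$1) \<and> val_ge v 0 (w$2)}"

lemma lattice_eq_image_std_lattice:
  fixes v :: "'k::field \<Rightarrow> int" and L :: "('k^2) set"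
  assumes "lattice v L"
  shows "\<exists>P. det P \<noteq> 0 \<and> L = (\<lambda>w. P *v w) ` std_lattice v"
proof -
  obtain x y where xy: "x $ 1 * y $ 2 - x $ 2 * y $ 1 \<noteq> 0"
    "L = {a *s x + b *s y | a b. a \<in> val_ring v \<and> b \<in> val_ring v}"
    using assms unfolding lattice_def by blast
  define P :: "'k^2^2" where "P = (\<chi> i j. if j = 1 then x$i else y$i)"
  have "det P \<noteq> 0"
    using xy(1) by (simp add: P_def det_2 mult.commute)
  moreover have Pw: "P *v w = w$1 *s x + w$2 *s y" for w
    by (simp add: vec_2_eq_iff matrix_vector_mult_2_nth P_def mult.commute)
  have "L = (\<lambda>w. P *v w) ` std_lattice v"
  proof (intro equalityI subsetI)
    fix z assume "z \<in> L"
    then obtain a b where ab: "a \<in> val_ring v" "b \<in> val_ring v" "z = a *s x + b *s y"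
      using xy(2) by blast
    define w :: "'k^2" where "w = (\<chi> i. if i = 1 then a else b)"
    have "w \<in> std_lattice v" "z = P *v w"
      using ab by (simp_all add: std_lattice_def w_def Pw val_ring_iff_val_ge)
    then show "z \<in> (\<lambda>w. P *v w) ` std_lattice v"
      by blast
  next
    fix z assume "z \<in> (\<lambda>w. P *v w) ` std_lattice v"
    then show "z \<in> L"
      using xy(2) by (auto simp: std_lattice_def Pw val_ring_iff_val_ge)
  qed
  ultimately show ?thesis
    by blast
qed

text \<open>A matrix M of determinant \<delta> with M O^2 = c O^2 has entries c u with u integral, and c^2 is
  \<delta> times an integral determinant; hence v c, and so every entry, is at least -|v \<delta>|.\<close>

lemma mat_val_ge_if_image_std_lattice:
  fixes M :: "'k::field^2^2"
  assumes dv: "discrete_valuation v" and "det M \<noteq> 0" "c \<noteq> 0"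
    and M: "(\<lambda>w. M *v w) ` std_lattice v = (\<lambda>u. c *s u) ` std_lattice v"
  shows "mat_val_ge v (- \<bar>v (det M)\<bar>) M"
proof -
  define e1 :: "'k^2" where "e1 = (\<chi> i. if i = 1 then 1 else 0)"
  define e2 :: "'k^2" where "e2 = (\<chi> i. if i = 1 then 0 else 1)"
  have e: "e1 \<in> std_lattice v" "e2 \<in> std_lattice v"
    by (simp_all add: std_lattice_def e1_def e2_def val_ge_def val_one[OF dv])
  obtain u1 u2 where u: "u1 \<in> std_lattice v" "M *v e1 = c *s u1"
    "u2 \<in> std_lattice v" "M *v e2 = c *s u2"
    using M e by (metis (no_types, lifting) imageE imageI)
  obtain a b where ab: "a \<in> std_lattice v" "c *s e1 = M *v a"
    "b \<in> std_lattice v" "c *s e2 = M *v b"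
    using M e by (metis (no_types, lifting) imageE imageI)
  have Mc: "M$1$1 = c * u1$1" "M$2$1 = c * u1$2" "M$1$2 = c * u2$1" "M$2$2 = c * u2$2"
    using u(2,4) by (simp_all add: vec_2_eq_iff matrix_vector_mult_2_nth e1_def e2_def)
  define D where "D = a$1 * b$2 - a$2 * b$1"
  have "c * c = (M$1$1 * a$1 + M$1$2 * a$2) * (M$2$1 * b$1 + M$2$2 * b$2)
      - (M$2$1 * a$1 + M$2$2 * a$2) * (M$1$1 * b$1 + M$1$2 * b$2)"
    using ab(2,4) by (simp add: vec_2_eq_iff matrix_vector_mult_2_nth e1_def e2_def)
  also have "\<dots> = det M * D"
    unfolding D_def det_2 by (simp add: algebra_simps)
  finally have cc: "c * c = det M * D" .
  then have "D \<noteq> 0"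
    using \<open>c \<noteq> 0\<close> by auto
  moreover have "val_ge v 0 D"
    using ab(1,3) val_ge_diff[OF dv] val_ge_mult[OF dv, of 0 _ 0]
    by (simp add: D_def std_lattice_def)
  ultimately have "v c + v c \<ge> v (det M)"
    using cc val_mult[OF dv] \<open>c \<noteq> 0\<close> \<open>det M \<noteq> 0\<close> by (metis le_add_same_cancel1 val_ge_def)
  then have "val_ge v (- \<bar>v (det M)\<bar>) c"
    unfolding val_ge_def by linarith
  then have "val_ge v (- \<bar>v (det M)\<bar> + 0) (c * x)" if "val_ge v 0 x" for x
    using val_ge_mult[OF dv _ that] by blast
  then show ?thesis
    using u(1,3) by (simp add: mat_val_ge_iff Mc std_lattice_def)
qed

lemma inverse_matrix_exists:
  assumes "det (P::'k::field^'n^'n) \<noteq> 0"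
  obtains T where "P ** T = mat 1" "T ** P = mat 1"
  using assms by (auto simp: invertible_det_nz[symmetric] invertible_def)

lemma transporter_bounded:
  assumes dv: "discrete_valuation v" and V: "BT_vertex v V" and W: "BT_vertex v W"
  shows "\<exists>b. \<forall>A::'k::field^2^2. det A = 1 \<longrightarrow> act_vertex A V = W \<longrightarrow> mat_val_ge v b A"
proof -
  obtain L where L: "lattice v L" "V = {(\<lambda>x. c *s x) ` L | c. c \<noteq> 0}"
    using V unfolding BT_vertex_def by blast
  obtain L' where L': "lattice v L'" "W = {(\<lambda>x. c *s x) ` L' | c. c \<noteq> 0}"
    using W unfolding BT_vertex_def by blast
  obtain P where P: "det P \<noteq> 0" "L = (\<lambda>w. P *v w) ` std_lattice v"
    using lattice_eq_image_std_lattice[OF L(1)] by blast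
  obtain P' where P': "det P' \<noteq> 0" "L' = (\<lambda>w. P' *v w) ` std_lattice v"
    using lattice_eq_image_std_lattice[OF L'(1)] by blast
  obtain T where T: "P ** T = mat 1" "T ** P = mat 1"
    using inverse_matrix_exists[OF P(1)] .
  obtain T' where T': "P' ** T' = mat 1" "T' ** P' = mat 1"
    using inverse_matrix_exists[OF P'(1)] .
  define \<delta> where "\<delta> = det (T' ** P)"
  have "\<delta> \<noteq> 0"
    using T'(2) P(1) det_mul[of T' P'] by (auto simp: \<delta>_def det_mul)
  obtain bP' where bP': "mat_val_ge v bP' P'"
    using mat_val_ge_exists by blast
  obtain bT where bT: "mat_val_ge v bT T"
    using mat_val_ge_exists by blast
  have "mat_val_ge v (bP' + - \<bar>v \<delta>\<bar> + bT) A" if A: "det A = 1" "act_vertex A V = W" for A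
  proof -
    define M where "M = T' ** A ** P"
    have "L \<in> V"
      unfolding L(2) by (intro CollectI exI[of _ 1]) simp
    then have "(\<lambda>x. A *v x) ` L \<in> W"
      using A(2) unfolding act_vertex_def by blast
    then obtain c where c: "c \<noteq> 0" "(\<lambda>x. A *v x) ` L = (\<lambda>x. c *s x) ` L'"
      using L'(2) by blast
    have "(\<lambda>w. M *v w) ` std_lattice v = (\<lambda>x. T' *v x) ` ((\<lambda>x. A *v x) ` L)"
      unfolding P(2) image_image M_def by (simp add: matrix_vector_mul_assoc matrix_mul_assoc)
    also have "\<dots> = (\<lambda>u. c *s u) ` std_lattice v"
      unfolding c(2) P'(2) image_image
      by (simp add: matrix_vector_mult_2_scalar matrix_vector_mul_assoc T'(2))
    moreover have "det M = \<delta>"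
      using A(1) by (simp add: M_def \<delta>_def det_mul)
    ultimately have "mat_val_ge v (- \<bar>v \<delta>\<bar>) M"
      using mat_val_ge_if_image_std_lattice[OF dv _ c(1)] \<open>\<delta> \<noteq> 0\<close> by metis
    then have "mat_val_ge v (bP' + - \<bar>v \<delta>\<bar> + bT) (P' ** M ** T)"
      using mat_val_ge_mult[OF dv] bP' bT by blast
    moreover have "P' ** M ** T = (P' ** T') ** A ** (P ** T)"
      by (simp add: M_def matrix_mul_assoc)
    ultimately show ?thesis
      using T(1) T'(1) by simp
  qed
  then show ?thesis
    by blast
qed

lemma act_vertex_mult: "act_vertex (A ** B) V = act_vertex A (act_vertex B V)"
  unfolding act_vertex_def image_image by (simp add: matrix_vector_mul_assoc)

lemma act_vertex_one: "act_vertex (mat 1) V = V"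
  unfolding act_vertex_def by simp

lemma act_vertex_uminus_one:
  assumes "BT_vertex v (V::('k::field^2) set set)"
  shows "act_vertex (- mat 1) V = V"
proof -
  obtain L where V: "V = {(\<lambda>x. c *s x) ` L | c. c \<noteq> 0}"
    using assms unfolding BT_vertex_def by blast
  have "(- mat 1) *v (c *s x) = (- c) *s x" for c :: 'k and x :: "'k^2"
    unfolding vec_2_eq_iff matrix_vector_mult_2_nth by (simp add: mat_1_2_nth)
  then have "(\<lambda>x. (- mat 1) *v x) ` ((\<lambda>x. c *s x) ` L) = (\<lambda>x. (- c) *s x) ` L" for c :: 'k
    unfolding image_image by simp
  then have "act_vertex (- mat 1) V = {(\<lambda>x. (- c) *s x) ` L | c. c \<noteq> 0}"
    unfolding act_vertex_def V by blast
  also have "\<dots> = V"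
    unfolding V by (metis (no_types, opaque_lifting) neg_0_equal_iff_equal minus_minus)
  finally show ?thesis .
qed

lemma act_edge_mult: "act_edge (A ** B) e = act_edge A (act_edge B e)"
  unfolding act_edge_def image_image act_vertex_mult by simp

lemma act_edge_one: "act_edge (mat 1) e = e"
  unfolding act_edge_def act_vertex_one by simp

lemma act_edge_uminus_one:
  assumes "BT_edge v e"
  shows "act_edge (- mat 1) e = e"
  using assms act_vertex_uminus_one unfolding BT_edge_def act_edge_def by auto

lemma subgroup_stabiliser:
  fixes \<alpha> :: "'k::field^2^2 \<Rightarrow> 'x \<Rightarrow> 'x"
  assumes sub: "subgroup G PSL2"
    and mult: "\<And>A B y. \<alpha> (A ** B) y = \<alpha> A (\<alpha> B y)"
    and one: "\<alpha> (mat 1) x = x" and uminus_one: "\<alpha> (- mat 1) x = x"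
  shows "subgroup {g\<in>G. \<forall>A\<in>g. \<alpha> A x = x} PSL2"
proof
  have G: "G \<subseteq> carrier PSL2"
    using subgroup.subset[OF sub] .
  then show "{g\<in>G. \<forall>A\<in>g. \<alpha> A x = x} \<subseteq> carrier PSL2"
    by auto
  show "g \<otimes>\<^bsub>PSL2\<^esub> h \<in> {g\<in>G. \<forall>A\<in>g. \<alpha> A x = x}"
    if "g \<in> {g\<in>G. \<forall>A\<in>g. \<alpha> A x = x}" "h \<in> {g\<in>G. \<forall>A\<in>g. \<alpha> A x = x}" for g h
    using that subgroup.m_closed[OF sub] mult by (auto simp: mult_PSL2)
  show "\<one>\<^bsub>PSL2\<^esub> \<in> {g\<in>G. \<forall>A\<in>g. \<alpha> A x = x}"
    using subgroup.one_closed[OF sub] one uminus_one by (auto simp: one_PSL2)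
  show "inv\<^bsub>PSL2\<^esub> g \<in> {g\<in>G. \<forall>A\<in>g. \<alpha> A x = x}" if g: "g \<in> {g\<in>G. \<forall>A\<in>g. \<alpha> A x = x}" for g
  proof -
    obtain A where A: "det A = 1" "g = {A, - A}"
      using g G by (blast elim: carrier_PSL2_memE)
    have "\<alpha> (adj2 B) x = x" if "B \<in> g" for B
    proof -
      have "adj2 B ** B = mat 1"
        using A that by (auto simp: det_2_uminus intro: adj2_mult_det_1)
      then have "\<alpha> (adj2 B) (\<alpha> B x) = x"
        using mult one by metis
      then show ?thesis
        using g that by simp
    qed
    moreover have "inv\<^bsub>PSL2\<^esub> g = {adj2 A, adj2 (- A)}"
      using A inv_PSL2[of A] by (simp add: proj_PSL2_eq adj2_uminus)
    moreover have "inv\<^bsub>PSL2\<^esub> g \<in> G"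
      using subgroup.m_inv_closed[OF sub] g by blast
    ultimately show ?thesis
      using A(2) by auto
  qed
qed

definition transporter :: "('k::field^2^2) set set \<Rightarrow> ('k^2) set set \<Rightarrow> ('k^2) set set \<Rightarrow> ('k^2^2) set set" where
  "transporter G V W = {g\<in>G. \<exists>A\<in>g. act_vertex A V = W}"

lemma finite_transporter:
  assumes nl: "nonarch_local_field v" and sub: "subgroup G PSL2" and disc: "discrete_PSL2 v G"
    and V: "BT_vertex v V" and W: "BT_vertex v W"
  shows "finite (transporter G V W)"
proof -
  have dv: "discrete_valuation v" and fr: "finite_residue_field v"
    using nl by (simp_all add: nonarch_local_field_def)
  obtain b where b: "\<And>A. det A = 1 \<Longrightarrow> act_vertex A V = W \<Longrightarrow> mat_val_ge v b A"
    using transporter_bounded[OF dv V W] by blast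
  have "transporter G V W \<subseteq> {g\<in>G. \<exists>A\<in>g. mat_val_ge v b A}"
    unfolding transporter_def using subgroup.subset[OF sub] b carrier_PSL2_memD by blast
  then show ?thesis
    using finite_bounded_subset_discrete[OF dv fr sub disc] by (rule finite_subset)
qed

lemma finite_stab_vertex:
  assumes "nonarch_local_field v" "subgroup G PSL2" "discrete_PSL2 v G" "BT_vertex v V"
  shows "finite (stab_vertex G V)"
proof -
  have "g \<in> transporter G V V" if g: "g \<in> stab_vertex G V" for g
  proof -
    have "g \<in> G" "\<forall>A\<in>g. act_vertex A V = V"
      using g by (simp_all add: stab_vertex_def)
    moreover have "g \<noteq> {}"
      using \<open>g \<in> G\<close> subgroup.subset[OF assms(2)] carrier_PSL2_nonempty by blast
    ultimately show ?thesis
      by (auto simp: transporter_def)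
  qed
  then show ?thesis
    using finite_transporter[OF assms assms(4)] by (meson finite_subset subsetI)
qed

lemma finite_stab_edge:
  assumes "nonarch_local_field v" "subgroup G PSL2" "discrete_PSL2 v G" "BT_edge v e"
  shows "finite (stab_edge G e)"
proof -
  obtain V W where V: "BT_vertex v V" and W: "BT_vertex v W" and e: "e = {V, W}"
    using assms(4) unfolding BT_edge_def by blast
  have "g \<in> transporter G V V \<union> transporter G V W" if g: "g \<in> stab_edge G e" for g
  proof -
    have "g \<in> G" and stab: "\<forall>A\<in>g. act_edge A e = e"
      using g by (simp_all add: stab_edge_def)
    have "g \<noteq> {}"
      using \<open>g \<in> G\<close> subgroup.subset[OF assms(2)] carrier_PSL2_nonempty by blast
    then obtain A where A: "A \<in> g"
      by blast
    have "act_vertex A V \<in> act_edge A e"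
      unfolding act_edge_def e by blast
    then have "act_vertex A V = V \<or> act_vertex A V = W"
      using stab A e by simp
    then show ?thesis
      using \<open>g \<in> G\<close> A by (auto simp: transporter_def)
  qed
  then show ?thesis
    using finite_transporter[OF assms(1-3) V V] finite_transporter[OF assms(1-3) V W]
    by (meson finite_UnI finite_subset subsetI)
qed

theorem lemma3p1:
  fixes v :: "'k::field \<Rightarrow> int"
    and G :: "('k ^2^2) set set"
  assumes "nonarch_local_field v"
    and "subgroup G PSL2"
    and "discrete_PSL2 v G"
    and "no_2_torsion G"
  shows "(\<forall>V. BT_vertex v V \<longrightarrow> unique_lift (stab_vertex G V)) \<and>
         (\<forall>e. BT_edge v e \<longrightarrow> unique_lift (stab_edge G e))"
proof -
  have lift: "unique_lift H" if "subgroup H PSL2" "H \<subseteq> G" "finite H" for H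
    using unique_lift_finite_subgroup[OF that(1,3)] that(2) assms(4)
    unfolding no_2_torsion_def by blast
  have "unique_lift (stab_vertex G V)" if V: "BT_vertex v V" for V
  proof (rule lift)
    show "subgroup (stab_vertex G V) PSL2"
      unfolding stab_vertex_def
      using subgroup_stabiliser[OF assms(2) act_vertex_mult act_vertex_one act_vertex_uminus_one[OF V]] .
    show "finite (stab_vertex G V)"
      using finite_stab_vertex[OF assms(1-3) V] .
  qed (auto simp: stab_vertex_def)
  moreover have "unique_lift (stab_edge G e)" if e: "BT_edge v e" for e
  proof (rule lift)
    show "subgroup (stab_edge G e) PSL2"
      unfolding stab_edge_def
      using subgroup_stabiliser[OF assms(2) act_edge_mult act_edge_one act_edge_uminus_one[OF e]] .
    show "finite (stab_edge G e)"
      using finite_stab_edge[OF assms(1-3) e] .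
  qed (auto simp: stab_edge_def)
  ultimately show ?thesis
    by blast
qed

end
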